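(* Let $k \geq p \geq 1$ be integers, and let $x_1, \dots, x_k, y_1, \dots, y_k$ be non-negative real numbers such that $\prod_{i \in I} x_i \leq \prod_{i \in I} y_i$ for every subset $I$ of $\{1,\dots,k\}$ with $|I| = p$. Then $\prod_{i=1}^k x_i \leq \prod_{i=1}^k y_i$. *)

theory Defs
  imports Main Complex_Main
begin

end

theory Submission
  imports Defs
begin

text \<open>Induct on the subset size. If the inequality holds for all \<open>m\<close>-subsets of an
  \<open>(m+1)\<close>-set \<open>J\<close>, multiplying it over the \<open>m+1\<close> subsets \<open>J - {j}\<close> gives
  \<open>(\<Prod>J x)^m \<le> (\<Prod>J y)^m\<close>, since every element of \<open>J\<close> is left out exactly once;
  taking \<open>m\<close>-th roots of nonnegative numbers yields the inequality for \<open>J\<close>.\<close>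

lemma prod_prod_remove_eq_power:
  fixes x :: "'i \<Rightarrow> 'a::comm_monoid_mult"
  assumes "finite J" and "card J = Suc m"
  shows "(\<Prod>j\<in>J. \<Prod>i\<in>J - {j}. x i) = (\<Prod>i\<in>J. x i) ^ m"
proof -
  have "(\<Prod>j\<in>J. \<Prod>i\<in>J - {j}. x i) = (\<Prod>j\<in>J. \<Prod>i\<in>{i\<in>J. j \<noteq> i}. x i)"
    by (intro prod.cong) auto
  also have "\<dots> = (\<Prod>i\<in>J. \<Prod>j\<in>{j\<in>J. j \<noteq> i}. x i)"
    by (rule prod.swap_restrict [OF assms(1) assms(1)])
  also have "\<dots> = (\<Prod>i\<in>J. x i ^ m)"
  proof (intro prod.cong refl)
    fix i assume "i \<in> J"
    then have "card {j\<in>J. j \<noteq> i} = m"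
      using assms card_Diff_singleton [of i J] by (simp add: set_diff_eq conj_commute)
    then show "(\<Prod>j\<in>{j\<in>J. j \<noteq> i}. x i) = x i ^ m" by simp
  qed
  also have "\<dots> = (\<Prod>i\<in>J. x i) ^ m"
    using assms(1) by (induction J rule: finite_induct) (simp_all add: power_mult_distrib)
  finally show ?thesis .
qed

lemma prod_le_prod_of_card_Suc:
  fixes x y :: "'i \<Rightarrow> 'a::linordered_semidom"
  assumes "finite J" and "card J = Suc m" and "1 \<le> m"
    and "\<And>i. i \<in> J \<Longrightarrow> 0 \<le> x i" and "\<And>i. i \<in> J \<Longrightarrow> 0 \<le> y i"
    and "\<And>I. I \<subseteq> J \<Longrightarrow> card I = m \<Longrightarrow> (\<Prod>i\<in>I. x i) \<le> (\<Prod>i\<in>I. y i)"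
  shows "(\<Prod>i\<in>J. x i) \<le> (\<Prod>i\<in>J. y i)"
proof -
  have "(\<Prod>i\<in>J. x i) ^ m = (\<Prod>j\<in>J. \<Prod>i\<in>J - {j}. x i)"
    using assms(1,2) by (rule prod_prod_remove_eq_power [symmetric])
  also have "\<dots> \<le> (\<Prod>j\<in>J. \<Prod>i\<in>J - {j}. y i)"
  proof (rule prod_mono, rule conjI)
    fix j assume "j \<in> J"
    show "0 \<le> (\<Prod>i\<in>J - {j}. x i)" using assms(4) by (intro prod_nonneg) auto
    show "(\<Prod>i\<in>J - {j}. x i) \<le> (\<Prod>i\<in>J - {j}. y i)"
      using \<open>j \<in> J\<close> assms(1,2) by (intro assms(6)) auto
  qed
  also have "\<dots> = (\<Prod>i\<in>J. y i) ^ m"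
    using assms(1,2) by (rule prod_prod_remove_eq_power)
  finally have "(\<Prod>i\<in>J. x i) ^ Suc (m - 1) \<le> (\<Prod>i\<in>J. y i) ^ Suc (m - 1)"
    using assms(3) by simp
  then show ?thesis
    by (rule power_le_imp_le_base) (use assms(5) in \<open>simp add: prod_nonneg\<close>)
qed

lemma prod_le_prod_of_larger_card:
  fixes x y :: "'i \<Rightarrow> 'a::linordered_semidom"
  assumes "finite S" and "1 \<le> p" and "p \<le> m"
    and "\<And>i. i \<in> S \<Longrightarrow> 0 \<le> x i" and "\<And>i. i \<in> S \<Longrightarrow> 0 \<le> y i"
    and "\<And>I. I \<subseteq> S \<Longrightarrow> card I = p \<Longrightarrow> (\<Prod>i\<in>I. x i) \<le> (\<Prod>i\<in>I. y i)"
  shows "\<And>J. J \<subseteq> S \<Longrightarrow> card J = m \<Longrightarrow> (\<Prod>i\<in>J. x i) \<le> (\<Prod>i\<in>J. y i)"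
  using assms(3)
proof (induction m rule: dec_induct)
  case base
  then show ?case using assms(6) by blast
next
  case (step m J)
  show ?case
  proof (rule prod_le_prod_of_card_Suc)
    show "finite J" using \<open>J \<subseteq> S\<close> assms(1) by (rule finite_subset)
    show "1 \<le> m" using assms(2) \<open>p \<le> m\<close> by simp
  qed (use step assms(4,5) in auto)
qed

theorem lemma5p2:
  fixes k p :: nat and x y :: "nat \<Rightarrow> real"
  assumes "1 \<le> p" and "p \<le> k"
    and "\<And>i. i \<in> {1..k} \<Longrightarrow> x i \<ge> 0"
    and "\<And>i. i \<in> {1..k} \<Longrightarrow> y i \<ge> 0"
    and "\<And>I. I \<subseteq> {1..k} \<Longrightarrow> card I = p \<Longrightarrow> (\<Prod>i\<in>I. x i) \<le> (\<Prod>i\<in>I. y i)"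
  shows "(\<Prod>i=1..k. x i) \<le> (\<Prod>i=1..k. y i)"
  using prod_le_prod_of_larger_card [of "{1..k}" p k x y] assms by simp

end
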